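(* Let $G$ be a finite simple connected graph and $H=C(G)$ its cone, obtained by adding a new vertex $w$ and joining every vertex of $G$ to $w$; work in $R=K[x_j: j\in V(H)]$. (i) If $(x_i: i\in V(G))\in\mathrm{Ass}(R/J(G)^t)$ for some $t\ge1$, then $(x_j: j\in V(H))\in\mathrm{Ass}(R/J(H)^{t+1})$. (ii) If $(x_i: i\in V(G))\in\mathrm{Ass}(R/I(G)^t)$ for some $t\geq2$, then $(x_j: j\in V(H))\in\mathrm{Ass}(R/I(H)^t)$.
   Context: For a graph $G$ with vertices indexing variables, the edge ideal is $I(G)=(x_ix_j:\{i,j\}\in E(G))$ and the cover ideal is $J(G)=\bigcap_{\{i,j\}\in E(G)}(x_i,x_j)$ (the Alexander dual of $I(G)$). $K$ is a field. *)

theory Defs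
  imports Main "HOL-Library.Poly_Mapping"
begin

text \<open>Polynomial ring K[x_j : j in 'v]: finitely supported functions from monomials
  (exponent vectors 'v =>0 nat) to coefficients.\<close>
type_synonym ('v, 'k) mpoly = "('v \<Rightarrow>\<^sub>0 nat) \<Rightarrow>\<^sub>0 'k"

definition var :: "'v \<Rightarrow> ('v, 'k::comm_ring_1) mpoly" where
  "var j = Poly_Mapping.single (Poly_Mapping.single j 1) 1"

definition is_ideal :: "'a::comm_ring_1 set \<Rightarrow> bool" where
  "is_ideal I \<longleftrightarrow> 0 \<in> I \<and> (\<forall>a\<in>I. \<forall>b\<in>I. a + b \<in> I) \<and> (\<forall>r. \<forall>a\<in>I. r * a \<in> I)"

definition ideal_gen :: "'a::comm_ring_1 set \<Rightarrow> 'a set" where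
  "ideal_gen S = {x. \<forall>I. is_ideal I \<and> S \<subseteq> I \<longrightarrow> x \<in> I}"

definition ideal_pow :: "'a::comm_ring_1 set \<Rightarrow> nat \<Rightarrow> 'a set" where
  "ideal_pow I t = ideal_gen {prod_list xs | xs. length xs = t \<and> set xs \<subseteq> I}"

definition prime_ideal :: "'a::comm_ring_1 set \<Rightarrow> bool" where
  "prime_ideal P \<longleftrightarrow> is_ideal P \<and> P \<noteq> UNIV \<and> (\<forall>a b. a * b \<in> P \<longrightarrow> a \<in> P \<or> b \<in> P)"

text \<open>Ass(R/I): primes of the form (I : f) = Ann_R(f + I).\<close>
definition Ass :: "'a::comm_ring_1 set \<Rightarrow> 'a set set" where
  "Ass I = {P. prime_ideal P \<and> (\<exists>f. P = {g. g * f \<in> I})}"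

definition simple_graph :: "'v set \<Rightarrow> 'v set set \<Rightarrow> bool" where
  "simple_graph V E \<longleftrightarrow> finite V \<and> (\<forall>e\<in>E. e \<subseteq> V \<and> card e = 2)"

definition connected_graph :: "'v set \<Rightarrow> 'v set set \<Rightarrow> bool" where
  "connected_graph V E \<longleftrightarrow>
     (\<forall>u\<in>V. \<forall>v\<in>V. (u, v) \<in> {(a, b). {a, b} \<in> E}\<^sup>*)"

definition edge_ideal :: "'v set set \<Rightarrow> ('v, 'k::comm_ring_1) mpoly set" where
  "edge_ideal E = ideal_gen {var i * var j | i j. {i, j} \<in> E}"

definition cover_ideal :: "'v set set \<Rightarrow> ('v, 'k::comm_ring_1) mpoly set" where
  "cover_ideal E = (\<Inter>e\<in>E. ideal_gen (var ` e))"

definition var_prime :: "'v set \<Rightarrow> ('v, 'k::comm_ring_1) mpoly set" where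
  "var_prime S = ideal_gen (var ` S)"

text \<open>Cone over G on vertex type 'v: new vertex None, old vertices Some v.\<close>
definition cone_edges :: "'v set \<Rightarrow> 'v set set \<Rightarrow> 'v option set set" where
  "cone_edges V E = ((`) Some) ` E \<union> {{Some v, None} | v. v \<in> V}"

end

theory Submission
  imports Defs
begin

text \<open>All ideals involved are monomial ideals, so everything becomes combinatorics of exponent
  vectors: \<open>u\<close> lies in the ideal generated by a set \<open>M\<close> of monomials iff some element of \<open>M\<close>
  divides it, and the \<open>t\<close>-th power is generated by the products of \<open>t\<close> elements of \<open>M\<close>.
  A prime generated by variables \<open>x_S\<close> is associated to a monomial ideal \<open>I\<close> only if some monomial
  \<open>u \<notin> I\<close> has \<open>x_v u \<in> I\<close> for all \<open>v \<in> S\<close>, and for the maximal ideal this is also sufficient.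
  So from a witness \<open>u\<close> for \<open>G\<close>, which may be taken free of the apex variable \<open>x_w\<close>, it suffices
  to build one for the cone \<open>H\<close>: for the edge ideal \<open>u\<close> itself works, and for the cover ideal
  \<open>x_w^t x_V u\<close>, where \<open>V\<close> is the vertex set of \<open>G\<close>. In the latter case, among \<open>t + 1\<close> covers of
  \<open>H\<close> dividing \<open>x_w^t x_V u\<close> one avoids \<open>w\<close> and hence contains all of \<open>V\<close>, and the other \<open>t\<close>
  restrict to covers of \<open>G\<close> dividing \<open>u\<close>.\<close>

lemma is_ideal_ideal_gen: "is_ideal (ideal_gen S)"
  unfolding is_ideal_def ideal_gen_def by auto

lemma ideal_gen_self: "S \<subseteq> ideal_gen S"
  unfolding ideal_gen_def by auto

lemma ideal_gen_minimal: "is_ideal I \<Longrightarrow> S \<subseteq> I \<Longrightarrow> ideal_gen S \<subseteq> I"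
  unfolding ideal_gen_def by auto

lemma ideal_gen_mono: "S \<subseteq> T \<Longrightarrow> ideal_gen S \<subseteq> ideal_gen T"
  unfolding ideal_gen_def by auto

lemma ideal_add: "is_ideal I \<Longrightarrow> a \<in> I \<Longrightarrow> b \<in> I \<Longrightarrow> a + b \<in> I"
  unfolding is_ideal_def by auto

lemma ideal_mult_left: "is_ideal I \<Longrightarrow> a \<in> I \<Longrightarrow> r * a \<in> I"
  unfolding is_ideal_def by auto

lemma ideal_diff: "is_ideal I \<Longrightarrow> a \<in> I \<Longrightarrow> b \<in> I \<Longrightarrow> a - b \<in> I"
  using ideal_add[of I a "(-1) * b"] ideal_mult_left[of I b "-1"] by simp

lemma is_ideal_colon: "is_ideal I \<Longrightarrow> is_ideal {h. h * g \<in> I}"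
  unfolding is_ideal_def by (simp add: distrib_right mult.assoc)

subsection \<open>Monomial ideals\<close>

definition monom :: "('v \<Rightarrow>\<^sub>0 nat) \<Rightarrow> ('v, 'k::comm_ring_1) mpoly" where
  "monom m = Poly_Mapping.single m 1"

lemma monom_add: "monom (a + b) = monom a * monom b"
  by (simp add: monom_def mult_single)

lemma monom_zero: "monom 0 = 1"
  by (simp add: monom_def one_poly_mapping.abs_eq)

lemma monom_sum_list: "monom (sum_list as) = prod_list (map monom as)"
  by (induction as) (simp_all add: monom_add monom_zero)

lemma var_eq_monom: "var v = monom (Poly_Mapping.single v 1)"
  by (simp add: var_def monom_def)

definition divisible_by :: "('v \<Rightarrow>\<^sub>0 nat) set \<Rightarrow> ('v \<Rightarrow>\<^sub>0 nat) \<Rightarrow> bool" where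
  "divisible_by M m \<longleftrightarrow> (\<exists>a\<in>M. Poly_Mapping.lookup a \<le> Poly_Mapping.lookup m)"

lemma divisible_by_member: "m \<in> M \<Longrightarrow> divisible_by M m"
  unfolding divisible_by_def by blast

lemma divisible_by_mono: "divisible_by M a \<Longrightarrow> Poly_Mapping.lookup a \<le> Poly_Mapping.lookup b \<Longrightarrow> divisible_by M b"
  unfolding divisible_by_def by (meson order_trans)

lemma divisible_by_subset: "divisible_by M m \<Longrightarrow> M \<subseteq> N \<Longrightarrow> divisible_by N m"
  unfolding divisible_by_def by blast

lemma divisible_by_add_left: "divisible_by M m \<Longrightarrow> divisible_by M (a + m)"
  by (erule divisible_by_mono) (simp add: le_fun_def lookup_add)

definition monomial_ideal :: "('v \<Rightarrow>\<^sub>0 nat) set \<Rightarrow> ('v, 'k::comm_ring_1) mpoly set" where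
  "monomial_ideal M = {p. \<forall>m\<in>Poly_Mapping.keys p. divisible_by M m}"

lemma monom_in_monomial_ideal_iff: "monom m \<in> monomial_ideal M \<longleftrightarrow> divisible_by M m"
  unfolding monomial_ideal_def monom_def by simp

lemma is_ideal_monomial_ideal: "is_ideal (monomial_ideal M :: ('v, 'k::comm_ring_1) mpoly set)"
  unfolding is_ideal_def monomial_ideal_def
proof (intro conjI ballI allI)
  fix p q :: "('v, 'k) mpoly"
  assume "p \<in> {p. \<forall>m\<in>Poly_Mapping.keys p. divisible_by M m}" "q \<in> {p. \<forall>m\<in>Poly_Mapping.keys p. divisible_by M m}"
  then show "p + q \<in> {p. \<forall>m\<in>Poly_Mapping.keys p. divisible_by M m}"
    using keys_add[of p q] by blast
next
  fix r p :: "('v, 'k) mpoly"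
  assume "p \<in> {p. \<forall>m\<in>Poly_Mapping.keys p. divisible_by M m}"
  then show "r * p \<in> {p. \<forall>m\<in>Poly_Mapping.keys p. divisible_by M m}"
    using keys_mult[of r p] by (auto intro: divisible_by_add_left)
qed simp

lemma monomial_ideal_mono: "A \<subseteq> B \<Longrightarrow> monomial_ideal A \<subseteq> monomial_ideal B"
  unfolding monomial_ideal_def using divisible_by_subset by blast

lemma monomial_ideal_subset_ideal_gen:
  "monomial_ideal M \<subseteq> (ideal_gen (monom ` M) :: ('v, 'k::comm_ring_1) mpoly set)"
proof
  fix p :: "('v, 'k) mpoly"
  show "p \<in> monomial_ideal M \<Longrightarrow> p \<in> ideal_gen (monom ` M)"
  proof (induction p rule: update_induct)
    case const
    show ?case using is_ideal_ideal_gen unfolding is_ideal_def by blast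
  next
    case (update p m c)
    have keys_upd: "Poly_Mapping.keys (Poly_Mapping.update m c p) = insert m (Poly_Mapping.keys p)"
      using update.hyps(2) by (simp add: keys_update)
    have "p \<in> monomial_ideal M"
      using update.prems by (simp add: monomial_ideal_def keys_upd)
    then have p: "p \<in> ideal_gen (monom ` M)" by (rule update.IH)
    obtain a where a: "a \<in> M" "Poly_Mapping.lookup a \<le> Poly_Mapping.lookup m"
      using update.prems by (auto simp: monomial_ideal_def divisible_by_def keys_upd)
    have "m - a + a = m"
      using a(2) by (intro poly_mapping_eqI) (simp add: le_fun_def lookup_add lookup_minus)
    then have "Poly_Mapping.single m c = Poly_Mapping.single (m - a) c * monom a"
      by (simp add: monom_def mult_single)
    moreover have "monom a \<in> ideal_gen (monom ` M)"
      using a(1) ideal_gen_self by blast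
    ultimately have "Poly_Mapping.single m c \<in> ideal_gen (monom ` M)"
      by (metis ideal_mult_left is_ideal_ideal_gen)
    moreover have "Poly_Mapping.update m c p = p + Poly_Mapping.single m c"
      using update.hyps(1)
      by (intro poly_mapping_eqI) (auto simp: lookup_update lookup_add lookup_single in_keys_iff)
    ultimately show ?case
      using p by (metis ideal_add is_ideal_ideal_gen)
  qed
qed

lemma ideal_gen_monom: "ideal_gen (monom ` M) = monomial_ideal M"
proof
  show "ideal_gen (monom ` M) \<subseteq> monomial_ideal M"
    by (rule ideal_gen_minimal[OF is_ideal_monomial_ideal])
      (auto simp: monom_in_monomial_ideal_iff intro: divisible_by_member)
qed (rule monomial_ideal_subset_ideal_gen)

lemma divisible_by_singles_iff:
  "divisible_by ((\<lambda>v. Poly_Mapping.single v 1) ` S) m \<longleftrightarrow> (\<exists>v\<in>S. Poly_Mapping.lookup m v \<noteq> 0)"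
proof -
  have "Poly_Mapping.lookup (Poly_Mapping.single v 1) \<le> Poly_Mapping.lookup m \<longleftrightarrow>
      Poly_Mapping.lookup m v \<noteq> 0" for v
    by (auto simp: le_fun_def lookup_single when_def)
  then show ?thesis
    unfolding divisible_by_def by blast
qed

lemma var_prime_eq_monomial_ideal:
  "var_prime S = monomial_ideal ((\<lambda>v. Poly_Mapping.single v 1) ` S)"
  unfolding var_prime_def ideal_gen_monom[symmetric] var_eq_monom image_image ..

subsection \<open>Powers of monomial ideals\<close>

lemma monomial_ideal_mult:
  assumes "p \<in> monomial_ideal A" "q \<in> monomial_ideal B"
  shows "p * q \<in> monomial_ideal {a + b | a b. a \<in> A \<and> b \<in> B}"
  unfolding monomial_ideal_def mem_Collect_eq
proof
  fix m assume "m \<in> Poly_Mapping.keys (p * q)"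
  then obtain m1 m2 where m: "m = m1 + m2" "m1 \<in> Poly_Mapping.keys p" "m2 \<in> Poly_Mapping.keys q"
    using keys_mult by blast
  obtain a b where "a \<in> A" "Poly_Mapping.lookup a \<le> Poly_Mapping.lookup m1"
    "b \<in> B" "Poly_Mapping.lookup b \<le> Poly_Mapping.lookup m2"
    using assms m(2,3) unfolding monomial_ideal_def divisible_by_def by blast
  then show "divisible_by {a + b | a b. a \<in> A \<and> b \<in> B} m"
    unfolding divisible_by_def m(1)
    by (intro bexI[of _ "a + b"]) (auto simp: le_fun_def lookup_add intro: add_mono)
qed

definition power_gens :: "('v \<Rightarrow>\<^sub>0 nat) set \<Rightarrow> nat \<Rightarrow> ('v \<Rightarrow>\<^sub>0 nat) set" where
  "power_gens M t = {sum_list as | as. length as = t \<and> set as \<subseteq> M}"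

lemma divisible_by_power_gens_iff:
  "divisible_by (power_gens M t) m \<longleftrightarrow>
     (\<exists>as. length as = t \<and> set as \<subseteq> M \<and> Poly_Mapping.lookup (sum_list as) \<le> Poly_Mapping.lookup m)"
  unfolding divisible_by_def power_gens_def by blast

lemma power_gens_mono: "M \<subseteq> N \<Longrightarrow> power_gens M t \<subseteq> power_gens N t"
  unfolding power_gens_def by blast

lemma prod_list_in_monomial_ideal_power_gens:
  fixes ps :: "('v, 'k::comm_ring_1) mpoly list"
  shows "set ps \<subseteq> monomial_ideal M \<Longrightarrow> prod_list ps \<in> monomial_ideal (power_gens M (length ps))"
proof (induction ps)
  case Nil
  have "divisible_by (power_gens M 0) 0"
    unfolding divisible_by_power_gens_iff by simp
  then have "(monom 0 :: ('v, 'k) mpoly) \<in> monomial_ideal (power_gens M 0)"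
    by (simp add: monom_in_monomial_ideal_iff)
  then show ?case
    by (simp add: monom_zero)
next
  case (Cons p ps)
  then have prod: "p * prod_list ps \<in> monomial_ideal {a + b | a b. a \<in> M \<and> b \<in> power_gens M (length ps)}"
    by (intro monomial_ideal_mult) auto
  have sums: "{a + b | a b. a \<in> M \<and> b \<in> power_gens M (length ps)} \<subseteq> power_gens M (length (p # ps))"
  proof
    fix c assume "c \<in> {a + b | a b. a \<in> M \<and> b \<in> power_gens M (length ps)}"
    then obtain a as where "c = sum_list (a # as)" "length (a # as) = length (p # ps)" "set (a # as) \<subseteq> M"
      unfolding power_gens_def by auto
    then show "c \<in> power_gens M (length (p # ps))"
      unfolding power_gens_def by blast
  qed
  show ?case
    using subsetD[OF monomial_ideal_mono[OF sums] prod] by simp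
qed

lemma ideal_pow_monomial_ideal:
  "ideal_pow (monomial_ideal M) t = (monomial_ideal (power_gens M t) :: ('v, 'k::comm_ring_1) mpoly set)"
proof
  show "ideal_pow (monomial_ideal M) t \<subseteq> monomial_ideal (power_gens M t)"
    unfolding ideal_pow_def
    by (rule ideal_gen_minimal[OF is_ideal_monomial_ideal])
      (auto dest: prod_list_in_monomial_ideal_power_gens)
  have "(monom ` power_gens M t :: ('v, 'k) mpoly set) \<subseteq> {prod_list ps | ps. length ps = t \<and> set ps \<subseteq> monomial_ideal M}"
  proof
    fix p :: "('v, 'k) mpoly" assume "p \<in> monom ` power_gens M t"
    then obtain as where "p = prod_list (map monom as)" "length as = t" "set as \<subseteq> M"
      unfolding power_gens_def by (auto simp: monom_sum_list)
    moreover have "set (map monom as) \<subseteq> monomial_ideal M"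
      using \<open>set as \<subseteq> M\<close> by (auto simp: monom_in_monomial_ideal_iff intro!: divisible_by_member)
    ultimately show "p \<in> {prod_list ps | ps. length ps = t \<and> set ps \<subseteq> monomial_ideal M}"
      by (intro CollectI exI[of _ "map monom as"]) simp
  qed
  then have "ideal_gen (monom ` power_gens M t :: ('v, 'k) mpoly set) \<subseteq> ideal_pow (monomial_ideal M) t"
    unfolding ideal_pow_def by (rule ideal_gen_mono)
  then show "monomial_ideal (power_gens M t) \<subseteq> (ideal_pow (monomial_ideal M) t :: ('v, 'k) mpoly set)"
    by (simp add: ideal_gen_monom)
qed

lemma lookup_sum_list: "Poly_Mapping.lookup (sum_list as) x = (\<Sum>a\<leftarrow>as. Poly_Mapping.lookup a x)"
  by (induction as) (simp_all add: lookup_add)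

lemma lookup_sum_list_remove1:
  fixes as :: "('v \<Rightarrow>\<^sub>0 nat) list"
  assumes "a \<in> set as"
  shows "Poly_Mapping.lookup (sum_list as) x =
    Poly_Mapping.lookup a x + Poly_Mapping.lookup (sum_list (remove1 a as)) x"
  unfolding lookup_sum_list using sum_list_map_remove1[OF assms, of "\<lambda>a. Poly_Mapping.lookup a x"] .

lemma length_le_lookup_sum_list:
  fixes as :: "('v \<Rightarrow>\<^sub>0 nat) list"
  assumes "\<And>a. a \<in> set as \<Longrightarrow> Poly_Mapping.lookup a x \<noteq> 0"
  shows "length as \<le> Poly_Mapping.lookup (sum_list as) x"
  using assms
proof (induction as)
  case (Cons a as)
  then have "0 < Poly_Mapping.lookup a x" "length as \<le> Poly_Mapping.lookup (sum_list as) x"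
    by auto
  then show ?case
    by (simp add: lookup_add)
qed simp

lemma sum_list_map_add_single:
  "sum_list (map (\<lambda>a. a + Poly_Mapping.single x 1) as) =
    sum_list as + Poly_Mapping.single x (length as :: nat)"
  by (induction as) (simp_all add: add_ac flip: single_add)

lemma lookup_update_zero: "Poly_Mapping.lookup (Poly_Mapping.update x 0 m) = (Poly_Mapping.lookup m)(x := 0)"
  by (auto simp: lookup_update)

lemma divisible_by_power_gens_update_zero:
  assumes closed: "\<And>a. a \<in> M \<Longrightarrow> Poly_Mapping.update x 0 a \<in> M"
    and "divisible_by (power_gens M t) m"
  shows "divisible_by (power_gens M t) (Poly_Mapping.update x 0 m)"
proof -
  obtain as where as: "length as = t" "set as \<subseteq> M"
    "Poly_Mapping.lookup (sum_list as) \<le> Poly_Mapping.lookup m"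
    using assms(2) unfolding divisible_by_power_gens_iff by blast
  have "Poly_Mapping.lookup (sum_list (map (Poly_Mapping.update x 0) as)) =
      (Poly_Mapping.lookup (sum_list as))(x := 0)"
    by (induction as) (auto simp: lookup_add lookup_update_zero)
  also have "\<dots> \<le> Poly_Mapping.lookup (Poly_Mapping.update x 0 m)"
    using as(3) by (simp add: lookup_update_zero le_fun_def)
  finally show ?thesis
    unfolding divisible_by_power_gens_iff using as(1,2) closed
    by (intro exI[of _ "map (Poly_Mapping.update x 0) as"]) auto
qed

text \<open>Pigeonhole: if \<open>x\<close> occurs at most \<open>t\<close> times in \<open>w\<close>, one of \<open>t + 1\<close> factors avoids it.\<close>
lemma divisible_by_power_gens_Suc_elim:
  assumes "divisible_by (power_gens M (t + 1)) w" "Poly_Mapping.lookup w x \<le> t"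
  obtains d cs where "d \<in> M" "Poly_Mapping.lookup d x = 0" "length cs = t" "set cs \<subseteq> M"
    "Poly_Mapping.lookup (d + sum_list cs) \<le> Poly_Mapping.lookup w"
proof -
  obtain ds where ds: "length ds = t + 1" "set ds \<subseteq> M"
    and le: "Poly_Mapping.lookup (sum_list ds) \<le> Poly_Mapping.lookup w"
    using assms(1) unfolding divisible_by_power_gens_iff by blast
  obtain d where d: "d \<in> set ds" "Poly_Mapping.lookup d x = 0"
  proof (rule ccontr)
    assume "\<not> thesis"
    then have "length ds \<le> Poly_Mapping.lookup (sum_list ds) x"
      using that by (intro length_le_lookup_sum_list) blast
    with ds(1) le_funD[OF le, of x] assms(2) show False
      by simp
  qed
  show ?thesis
  proof (rule that)
    show "d \<in> M" "Poly_Mapping.lookup d x = 0"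
      using d ds(2) by auto
    show "length (remove1 d ds) = t"
      using ds(1) d(1) by (simp add: length_remove1)
    show "set (remove1 d ds) \<subseteq> M"
      using set_remove1_subset[of d ds] ds(2) by (rule subset_trans)
    show "Poly_Mapping.lookup (d + sum_list (remove1 d ds)) \<le> Poly_Mapping.lookup w"
      using le lookup_sum_list_remove1[OF d(1)] by (simp add: le_fun_def lookup_add)
  qed
qed

lemma power_gens_factor_at:
  assumes "\<not> divisible_by (power_gens M t) u" "length as = t" "set as \<subseteq> M"
    and le: "Poly_Mapping.lookup (sum_list as) \<le> Poly_Mapping.lookup (Poly_Mapping.single x 1 + u)"
  obtains c where "c \<in> set as" "Poly_Mapping.lookup c x \<noteq> 0"
proof (rule ccontr)
  assume "\<not> thesis"
  then have zero: "Poly_Mapping.lookup (sum_list as) x = 0"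
    using that by (auto simp: lookup_sum_list sum_list_eq_0_iff)
  have "Poly_Mapping.lookup (sum_list as) \<le> Poly_Mapping.lookup u"
  proof (rule le_funI)
    fix y
    show "Poly_Mapping.lookup (sum_list as) y \<le> Poly_Mapping.lookup u y"
      using zero le_funD[OF le, of y] by (cases "y = x") (simp_all add: lookup_add lookup_single)
  qed
  with assms(1-3) show False
    unfolding divisible_by_power_gens_iff by blast
qed

subsection \<open>Associated primes of monomial ideals\<close>

lemma poly_mapping_add_eq_0_iff: "(a :: 'v \<Rightarrow>\<^sub>0 nat) + b = 0 \<longleftrightarrow> a = 0 \<and> b = 0"
  by (metis add_is_0 lookup_add lookup_zero poly_mapping_eqI)

lemma lookup_mult_zero:
  fixes p q :: "('v, 'k::comm_semiring_1) mpoly"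
  shows "Poly_Mapping.lookup (p * q) 0 = Poly_Mapping.lookup p 0 * Poly_Mapping.lookup q 0"
proof -
  have "(Poly_Mapping.lookup q m when 0 = l + m) = (Poly_Mapping.lookup q m when m = 0 when l = 0)" for l m
    by (simp add: when_when eq_commute[of 0] poly_mapping_add_eq_0_iff conj_commute)
  then show ?thesis
    by (simp add: lookup_mult Sum_any_when_independent mult_when)
qed

lemma var_prime_UNIV_eq:
  "(var_prime UNIV :: ('v, 'k::comm_ring_1) mpoly set) = {p. Poly_Mapping.lookup p 0 = 0}"
proof (rule set_eqI)
  fix p :: "('v, 'k) mpoly"
  have "(\<exists>v. Poly_Mapping.lookup m v \<noteq> 0) \<longleftrightarrow> m \<noteq> 0" for m :: "'v \<Rightarrow>\<^sub>0 nat"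
    by (metis lookup_zero poly_mapping_eqI)
  then have "p \<in> var_prime UNIV \<longleftrightarrow> 0 \<notin> Poly_Mapping.keys p"
    unfolding var_prime_eq_monomial_ideal monomial_ideal_def divisible_by_singles_iff by auto
  then show "p \<in> var_prime UNIV \<longleftrightarrow> p \<in> {p. Poly_Mapping.lookup p 0 = 0}"
    by (simp add: in_keys_iff)
qed

lemma prime_ideal_var_prime_UNIV: "prime_ideal (var_prime UNIV :: ('v, 'k::field) mpoly set)"
  unfolding prime_ideal_def
proof (intro conjI allI impI)
  show "is_ideal (var_prime UNIV :: ('v, 'k) mpoly set)"
    unfolding var_prime_def by (rule is_ideal_ideal_gen)
  have "1 \<notin> (var_prime UNIV :: ('v, 'k) mpoly set)"
    unfolding var_prime_UNIV_eq by simp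
  then show "var_prime UNIV \<noteq> (UNIV :: ('v, 'k) mpoly set)"
    by blast
qed (simp add: var_prime_UNIV_eq lookup_mult_zero)

text \<open>What remains of \<open>h\<close> after removing its constant term lies in the colon, so the constant
  term does too; a nonzero constant is a unit, which \<open>g \<notin> I\<close> excludes.\<close>
lemma colon_eq_var_prime_UNIV:
  fixes g :: "('v, 'k::field) mpoly"
  assumes I: "is_ideal I" and g: "g \<notin> I" and vars: "\<And>v. var v * g \<in> I"
  shows "{h. h * g \<in> I} = var_prime UNIV"
proof
  show var_prime_sub: "var_prime UNIV \<subseteq> {h. h * g \<in> I}"
    unfolding var_prime_def using vars by (intro ideal_gen_minimal is_ideal_colon I) auto
  show "{h. h * g \<in> I} \<subseteq> var_prime UNIV"
  proof
    fix h assume "h \<in> {h. h * g \<in> I}"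
    then have hg: "h * g \<in> I" by simp
    define c where "c = Poly_Mapping.lookup h 0"
    have "h - Poly_Mapping.single 0 c \<in> var_prime UNIV"
      unfolding var_prime_UNIV_eq c_def by (simp add: lookup_minus)
    then have "Poly_Mapping.single 0 c * g \<in> I"
      using ideal_diff[OF I hg, of "(h - Poly_Mapping.single 0 c) * g"] var_prime_sub
      by (auto simp: left_diff_distrib)
    then have "Poly_Mapping.single 0 (inverse c) * (Poly_Mapping.single 0 c * g) \<in> I"
      by (rule ideal_mult_left[OF I])
    then have "c = 0"
      using g by (cases "c = 0") (simp_all add: mult.assoc[symmetric] mult_single)
    then show "h \<in> var_prime UNIV"
      unfolding var_prime_UNIV_eq c_def by simp
  qed
qed

lemma var_prime_UNIV_in_Ass_monomial_ideal:
  assumes "\<not> divisible_by M u" "\<And>v. divisible_by M (Poly_Mapping.single v 1 + u)"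
  shows "(var_prime UNIV :: ('v, 'k::field) mpoly set) \<in> Ass (monomial_ideal M)"
proof -
  have "{h. h * monom u \<in> monomial_ideal M} = (var_prime UNIV :: ('v, 'k) mpoly set)"
    using assms
    by (intro colon_eq_var_prime_UNIV is_ideal_monomial_ideal)
      (simp_all add: monom_in_monomial_ideal_iff var_eq_monom flip: monom_add)
  then show ?thesis
    unfolding Ass_def using prime_ideal_var_prime_UNIV by blast
qed

lemma lookup_single_mult:
  fixes f :: "('v, 'k::comm_semiring_1) mpoly"
  shows "Poly_Mapping.lookup (Poly_Mapping.single a c * f) (a + m) = c * Poly_Mapping.lookup f m"
  by (simp add: lookup_mult lookup_single when_mult)

lemma Ass_monomial_ideal_var_prime_witness:
  assumes "(var_prime S :: ('v, 'k::field) mpoly set) \<in> Ass (monomial_ideal M)"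
  obtains u where "\<not> divisible_by M u" "\<And>v. v \<in> S \<Longrightarrow> divisible_by M (Poly_Mapping.single v 1 + u)"
proof -
  obtain f :: "('v, 'k) mpoly" where f: "var_prime S = {g. g * f \<in> monomial_ideal M}"
    using assms unfolding Ass_def by blast
  have "1 \<notin> (var_prime S :: ('v, 'k) mpoly set)"
    unfolding var_prime_eq_monomial_ideal monomial_ideal_def divisible_by_singles_iff by simp
  then have "f \<notin> monomial_ideal M"
    using f by auto
  then obtain u where u: "u \<in> Poly_Mapping.keys f" "\<not> divisible_by M u"
    unfolding monomial_ideal_def by blast
  have "divisible_by M (Poly_Mapping.single v 1 + u)" if "v \<in> S" for v
  proof -
    have "var v \<in> (var_prime S :: ('v, 'k) mpoly set)"
      unfolding var_prime_def using that ideal_gen_self by blast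
    then have "var v * f \<in> monomial_ideal M"
      using f by blast
    moreover have "Poly_Mapping.single v 1 + u \<in> Poly_Mapping.keys (var v * f)"
      using u(1) by (simp add: var_def lookup_single_mult in_keys_iff)
    ultimately show ?thesis
      unfolding monomial_ideal_def by blast
  qed
  with u(2) show ?thesis
    using that by blast
qed

text \<open>Deleting \<open>x_w\<close> from a witness keeps it a witness when the generators are closed under
  deleting \<open>x_w\<close>.\<close>
lemma Ass_var_prime_range_Some_witness:
  fixes M :: "('v option \<Rightarrow>\<^sub>0 nat) set"
  assumes "(var_prime (range Some) :: ('v option, 'k::field) mpoly set) \<in> Ass (monomial_ideal (power_gens M t))"
    and closed: "\<And>a. a \<in> M \<Longrightarrow> Poly_Mapping.update None 0 a \<in> M"
  obtains u where "Poly_Mapping.lookup u None = 0" "\<not> divisible_by (power_gens M t) u"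
    "\<And>v. divisible_by (power_gens M t) (Poly_Mapping.single (Some v) 1 + u)"
proof -
  obtain u where u: "\<not> divisible_by (power_gens M t) u"
    and u_range: "\<And>x. x \<in> range Some \<Longrightarrow> divisible_by (power_gens M t) (Poly_Mapping.single x 1 + u)"
    using Ass_monomial_ideal_var_prime_witness[OF assms(1)] by metis
  have u_Some: "divisible_by (power_gens M t) (Poly_Mapping.single (Some v) 1 + u)" for v
    by (rule u_range) simp
  let ?u = "Poly_Mapping.update None 0 u"
  have "Poly_Mapping.lookup ?u None = 0"
    by (simp add: lookup_update)
  moreover have "\<not> divisible_by (power_gens M t) ?u"
  proof
    assume "divisible_by (power_gens M t) ?u"
    moreover have "Poly_Mapping.lookup ?u \<le> Poly_Mapping.lookup u"
      by (simp add: lookup_update_zero le_fun_def)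
    ultimately show False
      using u by (blast intro: divisible_by_mono)
  qed
  moreover have "divisible_by (power_gens M t) (Poly_Mapping.single (Some v) 1 + ?u)" for v
  proof -
    have "Poly_Mapping.update None 0 (Poly_Mapping.single (Some v) 1 + u) = Poly_Mapping.single (Some v) 1 + ?u"
      by (rule poly_mapping_eqI) (simp add: lookup_update lookup_add lookup_single)
    then show ?thesis
      using divisible_by_power_gens_update_zero[OF closed u_Some[of v]] by simp
  qed
  ultimately show ?thesis
    by (rule that)
qed

subsection \<open>Edge and cover ideals\<close>

definition edge_monomials :: "'v set set \<Rightarrow> ('v \<Rightarrow>\<^sub>0 nat) set" where
  "edge_monomials E = {Poly_Mapping.single i 1 + Poly_Mapping.single j 1 | i j. {i, j} \<in> E}"

lemma edge_ideal_eq_monomial_ideal: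
  "(edge_ideal E :: ('v, 'k::comm_ring_1) mpoly set) = monomial_ideal (edge_monomials E)"
proof -
  have "{var i * var j | i j. {i, j} \<in> E} = (monom ` edge_monomials E :: ('v, 'k) mpoly set)"
    unfolding edge_monomials_def var_eq_monom by (auto simp flip: monom_add)
  then show ?thesis
    unfolding edge_ideal_def by (simp add: ideal_gen_monom)
qed

lemma edge_monomials_mono: "E \<subseteq> F \<Longrightarrow> edge_monomials E \<subseteq> edge_monomials F"
  unfolding edge_monomials_def by blast

lemma edge_monomial_at:
  assumes "c \<in> edge_monomials E" "Poly_Mapping.lookup c a \<noteq> 0"
  obtains b where "{a, b} \<in> E" "c = Poly_Mapping.single a 1 + Poly_Mapping.single b 1"
proof -
  obtain i j where ij: "c = Poly_Mapping.single i 1 + Poly_Mapping.single j 1" "{i, j} \<in> E"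
    using assms(1) unfolding edge_monomials_def by blast
  then have "a = i \<or> a = j"
    using assms(2) by (auto simp: lookup_add lookup_single when_def split: if_splits)
  with ij that show ?thesis
    by (metis add.commute insert_commute)
qed

definition cover_monomials :: "'v set set \<Rightarrow> ('v \<Rightarrow>\<^sub>0 nat) set" where
  "cover_monomials E = {c. \<forall>e\<in>E. \<exists>v\<in>e. Poly_Mapping.lookup c v \<noteq> 0}"

lemma cover_monomials_upward_closed:
  assumes c: "c \<in> cover_monomials E" and le: "Poly_Mapping.lookup c \<le> Poly_Mapping.lookup d"
  shows "d \<in> cover_monomials E"
proof -
  have "Poly_Mapping.lookup d v \<noteq> 0" if "Poly_Mapping.lookup c v \<noteq> 0" for v
    using that le_funD[OF le, of v] by linarith
  with c show ?thesis
    unfolding cover_monomials_def by blast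
qed

lemma divisible_by_cover_monomials_iff: "divisible_by (cover_monomials E) m \<longleftrightarrow> m \<in> cover_monomials E"
  using cover_monomials_upward_closed divisible_by_member unfolding divisible_by_def by blast

lemma cover_ideal_eq_monomial_ideal:
  "(cover_ideal E :: ('v, 'k::comm_ring_1) mpoly set) = monomial_ideal (cover_monomials E)"
proof -
  have "cover_ideal E = (\<Inter>e\<in>E. monomial_ideal ((\<lambda>v. Poly_Mapping.single v 1) ` e))"
    unfolding cover_ideal_def var_prime_eq_monomial_ideal[unfolded var_prime_def] ..
  also have "\<dots> = monomial_ideal (cover_monomials E)"
    unfolding monomial_ideal_def divisible_by_singles_iff divisible_by_cover_monomials_iff
    unfolding cover_monomials_def by blast
  finally show ?thesis .
qed

lemma cover_monomials_Un: "cover_monomials (E \<union> F) = cover_monomials E \<inter> cover_monomials F"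
  unfolding cover_monomials_def by blast

lemma cover_monomials_update_zero:
  assumes "x \<notin> \<Union>E" "c \<in> cover_monomials E"
  shows "Poly_Mapping.update x 0 c \<in> cover_monomials E"
  unfolding cover_monomials_def
proof (intro CollectI ballI)
  fix e assume e: "e \<in> E"
  then obtain v where v: "v \<in> e" "Poly_Mapping.lookup c v \<noteq> 0"
    using assms(2) unfolding cover_monomials_def by auto
  then have "v \<noteq> x"
    using assms(1) e by auto
  with v show "\<exists>v\<in>e. Poly_Mapping.lookup (Poly_Mapping.update x 0 c) v \<noteq> 0"
    by (auto simp: lookup_update)
qed

definition indicator_monomial :: "'v set \<Rightarrow> ('v \<Rightarrow>\<^sub>0 nat)" where
  "indicator_monomial A = (\<Sum>v\<in>A. Poly_Mapping.single v 1)"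

lemma lookup_indicator_monomial:
  "finite A \<Longrightarrow> Poly_Mapping.lookup (indicator_monomial A) v = (if v \<in> A then 1 else 0)"
  unfolding indicator_monomial_def by (simp add: lookup_sum lookup_single when_def)

lemma vertex_complement_in_cover_monomials:
  assumes "finite (UNIV :: 'v set)" "\<And>e. e \<in> F \<Longrightarrow> card e = 2"
  shows "indicator_monomial (UNIV - {x :: 'v}) \<in> cover_monomials F"
  unfolding cover_monomials_def
proof (intro CollectI ballI)
  fix e assume "e \<in> F"
  have "\<not> e \<subseteq> {x}"
    using card_mono[of "{x}" e] assms(2)[OF \<open>e \<in> F\<close>] by auto
  then obtain v where "v \<in> e" "v \<noteq> x"
    by blast
  with assms(1) show "\<exists>v\<in>e. Poly_Mapping.lookup (indicator_monomial (UNIV - {x})) v \<noteq> 0"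
    by (auto simp: lookup_indicator_monomial)
qed

subsection \<open>The cone over a graph\<close>

lemma graph_edges_subset_cone_edges: "(`) Some ` E \<subseteq> cone_edges V E"
  unfolding cone_edges_def by blast

lemma card_cone_edge:
  assumes "\<And>e. e \<in> E \<Longrightarrow> card e = 2" "e \<in> cone_edges V E"
  shows "card e = 2"
  using assms(2) unfolding cone_edges_def
proof
  assume "e \<in> (`) Some ` E"
  then show "card e = 2"
    using assms(1) by (auto simp: card_image)
qed auto

lemma apex_edge_monomial:
  "Poly_Mapping.single None 1 + Poly_Mapping.single (Some v) 1 \<in> edge_monomials (cone_edges UNIV E)"
  unfolding edge_monomials_def cone_edges_def by blast

lemma lookup_apex_graph_edge_monomial:
  assumes "c \<in> edge_monomials ((`) Some ` E)"
  shows "Poly_Mapping.lookup c None = 0"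
proof -
  obtain i j where ij: "c = Poly_Mapping.single i 1 + Poly_Mapping.single j 1" "{i, j} \<in> (`) Some ` E"
    using assms unfolding edge_monomials_def by blast
  then have "i \<noteq> None" "j \<noteq> None"
    by blast+
  with ij(1) show ?thesis
    by (simp add: lookup_add lookup_single)
qed

lemma cone_edge_monomial_avoiding_apex:
  assumes "c \<in> edge_monomials (cone_edges UNIV E)" "Poly_Mapping.lookup c None = 0"
  shows "c \<in> edge_monomials ((`) Some ` E)"
proof -
  obtain i j where ij: "c = Poly_Mapping.single i 1 + Poly_Mapping.single j 1" "{i, j} \<in> cone_edges UNIV E"
    using assms(1) unfolding edge_monomials_def by blast
  have "i \<noteq> None" "j \<noteq> None"
    using assms(2) unfolding ij(1) by (auto simp: lookup_add lookup_single when_def split: if_splits)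
  then have "{i, j} \<in> (`) Some ` E"
    using ij(2) unfolding cone_edges_def by blast
  with ij(1) show ?thesis
    unfolding edge_monomials_def by blast
qed

lemma cone_edge_power_not_divisible:
  assumes "Poly_Mapping.lookup u None = 0"
    and "\<not> divisible_by (power_gens (edge_monomials ((`) Some ` E)) t) u"
  shows "\<not> divisible_by (power_gens (edge_monomials (cone_edges UNIV E)) t) u"
proof
  assume "divisible_by (power_gens (edge_monomials (cone_edges UNIV E)) t) u"
  then obtain as where as: "length as = t" "set as \<subseteq> edge_monomials (cone_edges UNIV E)"
    "Poly_Mapping.lookup (sum_list as) \<le> Poly_Mapping.lookup u"
    unfolding divisible_by_power_gens_iff by blast
  have "c \<in> edge_monomials ((`) Some ` E)" if "c \<in> set as" for c
  proof (rule cone_edge_monomial_avoiding_apex)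
    show "c \<in> edge_monomials (cone_edges UNIV E)"
      using that as(2) by blast
    have "Poly_Mapping.lookup c None \<le> Poly_Mapping.lookup (sum_list as) None"
      using lookup_sum_list_remove1[OF that] by simp
    then show "Poly_Mapping.lookup c None = 0"
      using le_funD[OF as(3), of None] assms(1) by simp
  qed
  with as(1,3) assms(2) show False
    unfolding divisible_by_power_gens_iff by blast
qed

text \<open>Some edge \<open>{a, b}\<close> of the product must use the extra variable \<open>x_a\<close>; replacing it by the
  edge \<open>{b, w}\<close> of the cone trades \<open>x_a\<close> for the apex variable \<open>x_w\<close>.\<close>
lemma cone_edge_power_divisible_apex:
  assumes not_div: "\<not> divisible_by (power_gens (edge_monomials ((`) Some ` E)) t) u"
    and div: "divisible_by (power_gens (edge_monomials ((`) Some ` E)) t) (Poly_Mapping.single (Some a) 1 + u)"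
  shows "divisible_by (power_gens (edge_monomials (cone_edges UNIV E)) t) (Poly_Mapping.single None 1 + u)"
proof -
  let ?G = "edge_monomials ((`) Some ` E)" and ?H = "edge_monomials (cone_edges UNIV E)"
  obtain as where as: "length as = t" "set as \<subseteq> ?G"
    and le: "Poly_Mapping.lookup (sum_list as) \<le> Poly_Mapping.lookup (Poly_Mapping.single (Some a) 1 + u)"
    using div unfolding divisible_by_power_gens_iff by blast
  obtain c where c: "c \<in> set as" "Poly_Mapping.lookup c (Some a) \<noteq> 0"
    by (rule power_gens_factor_at[OF not_div as le])
  obtain b where "{Some a, b} \<in> (`) Some ` E"
    and c_eq: "c = Poly_Mapping.single (Some a) 1 + Poly_Mapping.single b 1"
    by (rule edge_monomial_at[OF subsetD[OF as(2) c(1)] c(2)])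
  then obtain b' where b': "b = Some b'"
    by (metis imageE insertCI)
  define c' where "c' = Poly_Mapping.single None 1 + Poly_Mapping.single b (1 :: nat)"
  have "c' \<in> ?H"
    unfolding c'_def b' by (rule apex_edge_monomial)
  moreover have "set (remove1 c as) \<subseteq> ?H"
    using set_remove1_subset[of c as] as(2) edge_monomials_mono[OF graph_edges_subset_cone_edges]
    by (rule subset_trans[OF subset_trans])
  moreover have "length (c' # remove1 c as) = t"
    using as(1) c(1) length_pos_if_in_set[OF c(1)] by (simp add: length_remove1)
  ultimately have bs: "length (c' # remove1 c as) = t" "set (c' # remove1 c as) \<subseteq> ?H"
    by simp_all
  have "Poly_Mapping.lookup (sum_list (c' # remove1 c as)) \<le> Poly_Mapping.lookup (Poly_Mapping.single None 1 + u)"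
  proof (rule le_funI)
    fix y
    have "Poly_Mapping.lookup (sum_list (c' # remove1 c as)) y + Poly_Mapping.lookup c y =
        Poly_Mapping.lookup (sum_list as) y + Poly_Mapping.lookup c' y"
      using lookup_sum_list_remove1[OF c(1), of y] by (simp add: lookup_add)
    then show "Poly_Mapping.lookup (sum_list (c' # remove1 c as)) y \<le> Poly_Mapping.lookup (Poly_Mapping.single None 1 + u) y"
      using le_funD[OF le, of y] unfolding c_eq c'_def b'
      by (simp add: lookup_add lookup_single when_def split: if_splits)
  qed
  with bs show ?thesis
    unfolding divisible_by_power_gens_iff by blast
qed

lemma Ass_cone_edge_ideal_power:
  fixes E :: "'v set set"
  assumes "(var_prime (range Some) :: ('v option, 'k::field) mpoly set) \<in> Ass (ideal_pow (edge_ideal ((`) Some ` E)) t)"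
  shows "(var_prime UNIV :: ('v option, 'k) mpoly set) \<in> Ass (ideal_pow (edge_ideal (cone_edges UNIV E)) t)"
proof -
  let ?G = "edge_monomials ((`) Some ` E)" and ?H = "edge_monomials (cone_edges UNIV E)"
  have closed: "Poly_Mapping.update None 0 c \<in> ?G" if "c \<in> ?G" for c
  proof -
    have "Poly_Mapping.update None 0 c = c"
      using lookup_apex_graph_edge_monomial[OF that] by (intro poly_mapping_eqI) (simp add: lookup_update)
    with that show ?thesis
      by simp
  qed
  obtain u where u_None: "Poly_Mapping.lookup u None = 0"
    and not_div: "\<not> divisible_by (power_gens ?G t) u"
    and div: "\<And>v. divisible_by (power_gens ?G t) (Poly_Mapping.single (Some v) 1 + u)"
    using Ass_var_prime_range_Some_witness[OF assms[unfolded edge_ideal_eq_monomial_ideal ideal_pow_monomial_ideal] closed]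
    by metis
  have "divisible_by (power_gens ?H t) (Poly_Mapping.single x 1 + u)" for x
  proof (cases x)
    case None
    then show ?thesis
      using cone_edge_power_divisible_apex[OF not_div div] by simp
  next
    case (Some v)
    then show ?thesis
      using div[of v] divisible_by_subset power_gens_mono[OF edge_monomials_mono[OF graph_edges_subset_cone_edges]]
      by metis
  qed
  then show ?thesis
    unfolding edge_ideal_eq_monomial_ideal ideal_pow_monomial_ideal
    by (rule var_prime_UNIV_in_Ass_monomial_ideal[OF cone_edge_power_not_divisible[OF u_None not_div]])
qed

lemma cover_monomials_cone_iff:
  "c \<in> cover_monomials (cone_edges UNIV E) \<longleftrightarrow>
    c \<in> cover_monomials ((`) Some ` E) \<and>
    (\<forall>v. Poly_Mapping.lookup c (Some v) \<noteq> 0 \<or> Poly_Mapping.lookup c None \<noteq> 0)"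
proof -
  have "c \<in> cover_monomials {{Some v, None} | v. v \<in> UNIV} \<longleftrightarrow>
      (\<forall>v. Poly_Mapping.lookup c (Some v) \<noteq> 0 \<or> Poly_Mapping.lookup c None \<noteq> 0)"
    unfolding cover_monomials_def Setcompr_eq_image by simp
  then show ?thesis
    unfolding cone_edges_def cover_monomials_Un Int_iff by (rule arg_cong)
qed

lemma graph_cover_add_apex:
  assumes "c \<in> cover_monomials ((`) Some ` E)"
  shows "c + Poly_Mapping.single None 1 \<in> cover_monomials (cone_edges UNIV E)"
proof -
  have "Poly_Mapping.lookup c \<le> Poly_Mapping.lookup (c + Poly_Mapping.single None 1)"
    by (simp add: le_fun_def lookup_add)
  with assms have "c + Poly_Mapping.single None 1 \<in> cover_monomials ((`) Some ` E)"
    by (rule cover_monomials_upward_closed)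
  then show ?thesis
    unfolding cover_monomials_cone_iff by (simp add: lookup_add)
qed

lemma cone_cover_power_not_divisible:
  fixes E :: "'v set set"
  assumes fin: "finite (UNIV :: 'v set)" and u_None: "Poly_Mapping.lookup u None = 0"
    and not_div: "\<not> divisible_by (power_gens (cover_monomials ((`) Some ` E)) t) u"
  shows "\<not> divisible_by (power_gens (cover_monomials (cone_edges UNIV E)) (t + 1))
    (Poly_Mapping.single None t + indicator_monomial (range Some) + u)"
proof
  let ?G = "cover_monomials ((`) Some ` E)" and ?H = "cover_monomials (cone_edges UNIV E)"
  let ?w = "Poly_Mapping.single None t + indicator_monomial (range Some) + u"
  have fin_Some: "finite (range (Some :: 'v \<Rightarrow> 'v option))"
    using fin by simp
  have w_None: "Poly_Mapping.lookup ?w None = t"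
    using u_None by (simp add: lookup_add lookup_indicator_monomial[OF fin_Some])
  have w_Some: "Poly_Mapping.lookup ?w (Some v) = Suc (Poly_Mapping.lookup u (Some v))" for v
    by (simp add: lookup_add lookup_single lookup_indicator_monomial[OF fin_Some])
  assume div_H: "divisible_by (power_gens ?H (t + 1)) ?w"
  obtain d cs where d: "d \<in> ?H" "Poly_Mapping.lookup d None = 0"
    and cs: "length cs = t" "set cs \<subseteq> ?H"
    and le: "Poly_Mapping.lookup (d + sum_list cs) \<le> Poly_Mapping.lookup ?w"
    by (rule divisible_by_power_gens_Suc_elim[OF div_H eq_imp_le[OF w_None]])
  have "set cs \<subseteq> ?G"
  proof
    fix c assume "c \<in> set cs"
    with cs(2) have "c \<in> ?H"
      by blast
    then show "c \<in> ?G"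
      unfolding cover_monomials_cone_iff by simp
  qed
  moreover have "Poly_Mapping.lookup (sum_list cs) \<le> Poly_Mapping.lookup (u + Poly_Mapping.single None t)"
  proof (rule le_funI)
    fix y
    have y: "Poly_Mapping.lookup d y + Poly_Mapping.lookup (sum_list cs) y \<le> Poly_Mapping.lookup ?w y"
      using le_funD[OF le, of y] by (simp add: lookup_add)
    show "Poly_Mapping.lookup (sum_list cs) y \<le> Poly_Mapping.lookup (u + Poly_Mapping.single None t) y"
    proof (cases y)
      case None
      then show ?thesis
        using y w_None u_None by (simp add: lookup_add)
    next
      case (Some v)
      have "Poly_Mapping.lookup d (Some v) \<noteq> 0"
        using d unfolding cover_monomials_cone_iff by simp
      with Some show ?thesis
        using y w_Some[of v] by (simp add: lookup_add lookup_single)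
    qed
  qed
  ultimately have div: "divisible_by (power_gens ?G t) (u + Poly_Mapping.single None t)"
    unfolding divisible_by_power_gens_iff using cs(1) by blast
  have closed: "Poly_Mapping.update None 0 c \<in> ?G" if "c \<in> ?G" for c
    using that by (intro cover_monomials_update_zero) auto
  have "divisible_by (power_gens ?G t) (Poly_Mapping.update None 0 (u + Poly_Mapping.single None t))"
    by (rule divisible_by_power_gens_update_zero[OF closed div])
  moreover have "Poly_Mapping.update None 0 (u + Poly_Mapping.single None t) = u"
    using u_None by (intro poly_mapping_eqI) (simp add: lookup_update lookup_add lookup_single)
  ultimately show False
    using not_div by simp
qed

text \<open>Lift the \<open>t\<close> covers of \<open>G\<close> dividing \<open>x_a u\<close> to covers of the cone by adding \<open>x_w\<close>, and
  complete them by the cover that omits only one vertex: \<open>w\<close> when \<open>x = x_a\<close>, and \<open>a\<close> when \<open>x = x_w\<close>.\<close>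
lemma cone_cover_power_divisible:
  fixes E :: "'v set set"
  assumes fin: "finite (UNIV :: 'v set)" and card2: "\<And>e. e \<in> E \<Longrightarrow> card e = 2"
    and u_None: "Poly_Mapping.lookup u None = 0"
    and div: "divisible_by (power_gens (cover_monomials ((`) Some ` E)) t) (Poly_Mapping.single (Some a) 1 + u)"
    and x: "x = Some a \<or> x = None"
  shows "divisible_by (power_gens (cover_monomials (cone_edges UNIV E)) (t + 1))
    (Poly_Mapping.single x 1 + (Poly_Mapping.single None t + indicator_monomial (range Some) + u))"
proof -
  let ?G = "cover_monomials ((`) Some ` E)" and ?H = "cover_monomials (cone_edges UNIV E)"
  obtain cs where cs: "length cs = t" "set cs \<subseteq> ?G"
    and le: "Poly_Mapping.lookup (sum_list cs) \<le> Poly_Mapping.lookup (Poly_Mapping.single (Some a) 1 + u)"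
    using div unfolding divisible_by_power_gens_iff by blast
  define y where "y = (if x = None then Some a else None)"
  define ds where "ds = map (\<lambda>c. c + Poly_Mapping.single None 1) cs @ [indicator_monomial (UNIV - {y})]"
  have fin_option: "finite (UNIV :: 'v option set)"
    using fin by simp
  have "length ds = t + 1"
    using cs(1) by (simp add: ds_def)
  moreover have "set ds \<subseteq> ?H"
    using cs(2) graph_cover_add_apex
      vertex_complement_in_cover_monomials[OF fin_option card_cone_edge[OF card2]]
    by (auto simp: ds_def)
  moreover have "Poly_Mapping.lookup (sum_list ds) \<le>
      Poly_Mapping.lookup (Poly_Mapping.single x 1 + (Poly_Mapping.single None t + indicator_monomial (range Some) + u))"
  proof (rule le_funI)
    fix z
    have "sum_list ds = sum_list cs + Poly_Mapping.single None t + indicator_monomial (UNIV - {y})"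
      using cs(1) sum_list_map_add_single[of None cs] by (simp add: ds_def)
    moreover have "Poly_Mapping.lookup (sum_list cs) z \<le> Poly_Mapping.lookup (Poly_Mapping.single (Some a) 1 + u) z"
      using le by (rule le_funD)
    ultimately show "Poly_Mapping.lookup (sum_list ds) z \<le>
        Poly_Mapping.lookup (Poly_Mapping.single x 1 + (Poly_Mapping.single None t + indicator_monomial (range Some) + u)) z"
      using x u_None fin fin_option unfolding y_def
      by (cases z) (auto simp: lookup_add lookup_single lookup_indicator_monomial)
  qed
  ultimately show ?thesis
    unfolding divisible_by_power_gens_iff by blast
qed

lemma Ass_cone_cover_ideal_power:
  fixes E :: "'v set set"
  assumes fin: "finite (UNIV :: 'v set)" and card2: "\<And>e. e \<in> E \<Longrightarrow> card e = 2"
    and "(var_prime (range Some) :: ('v option, 'k::field) mpoly set) \<in> Ass (ideal_pow (cover_ideal ((`) Some ` E)) t)"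
  shows "(var_prime UNIV :: ('v option, 'k) mpoly set) \<in> Ass (ideal_pow (cover_ideal (cone_edges UNIV E)) (t + 1))"
proof -
  have closed: "Poly_Mapping.update None 0 c \<in> cover_monomials ((`) Some ` E)"
    if "c \<in> cover_monomials ((`) Some ` E)" for c
    using that by (intro cover_monomials_update_zero) auto
  obtain u where u_None: "Poly_Mapping.lookup u None = 0"
    and not_div: "\<not> divisible_by (power_gens (cover_monomials ((`) Some ` E)) t) u"
    and div: "\<And>v. divisible_by (power_gens (cover_monomials ((`) Some ` E)) t) (Poly_Mapping.single (Some v) 1 + u)"
    using Ass_var_prime_range_Some_witness[OF assms(3)[unfolded cover_ideal_eq_monomial_ideal ideal_pow_monomial_ideal] closed]
    by metis
  have "divisible_by (power_gens (cover_monomials (cone_edges UNIV E)) (t + 1))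
      (Poly_Mapping.single x 1 + (Poly_Mapping.single None t + indicator_monomial (range Some) + u))" for x
  proof -
    obtain a where a: "x = Some a \<or> x = None"
      by (cases x) auto
    show ?thesis
      by (rule cone_cover_power_divisible[OF fin card2 u_None div a])
  qed
  then show ?thesis
    unfolding cover_ideal_eq_monomial_ideal ideal_pow_monomial_ideal
    by (rule var_prime_UNIV_in_Ass_monomial_ideal[OF cone_cover_power_not_divisible[OF fin u_None not_div]])
qed

theorem lemma3p5:
  fixes E :: "'v set set" and t :: nat
  assumes "simple_graph (UNIV :: 'v set) E"
    and "connected_graph (UNIV :: 'v set) E"
  shows "(t \<ge> 1 \<and>
           (var_prime (range Some) :: ('v option, 'k::field) mpoly set)
             \<in> Ass (ideal_pow (cover_ideal (((`) Some) ` E)) t)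
         \<longrightarrow> (var_prime UNIV :: ('v option, 'k) mpoly set)
             \<in> Ass (ideal_pow (cover_ideal (cone_edges UNIV E)) (t + 1)))
       \<and> (t \<ge> 2 \<and>
           (var_prime (range Some) :: ('v option, 'k) mpoly set)
             \<in> Ass (ideal_pow (edge_ideal (((`) Some) ` E)) t)
         \<longrightarrow> (var_prime UNIV :: ('v option, 'k) mpoly set)
             \<in> Ass (ideal_pow (edge_ideal (cone_edges UNIV E)) t))"
proof -
  have fin: "finite (UNIV :: 'v set)" and card2: "\<And>e. e \<in> E \<Longrightarrow> card e = 2"
    using assms(1) unfolding simple_graph_def by auto
  show ?thesis
    using Ass_cone_cover_ideal_power[OF fin card2] Ass_cone_edge_ideal_power by blast
qed

end
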